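(* Fix $\epsilon>0$, integers $2\le k\le n$, terminals $T=\{s_1,\dots,s_k\}\subseteq[n]$, and a cost function $c$. Let $\hat x^*$ be the output of the mechanism that samples independent $Z_{\{t,u\}}\sim\mathsf{Lap}(\sqrt2k/\epsilon)$ for every $t\in T$, $u\in[n]\setminus T$ and returns an optimal solution of $$\min_{x}\ \sum_{\{u,v\},u\neq v}c(u,v)\|x_u-x_v\|_1+\sum_{t\in T}\sum_{u\in[n]\setminus T}Z_{\{t,u\}}\|x_t-x_u\|_1\quad\text{s.t. } x_{s_i}=\mathbf{e}_i\ (i\in[k]),\ x_u\in\Delta_k\ (u\in[n]).$$ Then $\mathbb{E}[\mathcal{E}(\hat x^* )]-\mathsf{OPT}(c,n,k)\le O\!\left(\frac{nk\log k}{\epsilon}\right)$, and with high probability $\mathcal{E}(\hat x^* )-\mathsf{OPT}(c,n,k)\le O\!\left(\frac{nk\log(nk)}{\epsilon}\right)$.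
   Context: $\Delta_k=\{x\in\mathbb{R}^k_{\ge0}:\sum_{i}x^{(i)}=1\}$; $\mathbf{e}_i$ is the $i$-th standard basis vector. A cost function is a symmetric $c:[n]\times[n]\to\mathbb{R}_{\ge0}$. For $x\in(\Delta_k)^n$, $\mathcal{E}(x)=\sum_{\{u,v\},u\ne v}c(u,v)\|x_u-x_v\|_1$, and $\mathsf{OPT}(c,n,k)$ is the minimum of $\mathcal{E}(x)$ over $x\in(\Delta_k)^n$ with $x_{s_i}=\mathbf{e}_i$ for all $i$. $\mathsf{Lap}(b)$ is the Laplace distribution with density $\frac1{2b}e^{-|x|/b}$. *)

theory Defs
  imports "HOL-Probability.Probability"
begin

text \<open>Vertices are [n] = {..<n}, colours/coordinates are [k] = {..<k}.
  A point assignment is x :: nat => nat => real, with x u i the i-th coordinate of x_u.\<close>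

definition l1dist :: "nat \<Rightarrow> (nat \<Rightarrow> real) \<Rightarrow> (nat \<Rightarrow> real) \<Rightarrow> real" where
  "l1dist k p q = (\<Sum>i<k. \<bar>p i - q i\<bar>)"

definition in_simplex :: "nat \<Rightarrow> (nat \<Rightarrow> real) \<Rightarrow> bool" where
  "in_simplex k p \<longleftrightarrow> (\<forall>i<k. 0 \<le> p i) \<and> (\<Sum>i<k. p i) = 1"

definition basis_vec :: "nat \<Rightarrow> nat \<Rightarrow> real" where
  "basis_vec i = (\<lambda>j. if j = i then 1 else 0)"

definition feasible :: "nat \<Rightarrow> nat \<Rightarrow> (nat \<Rightarrow> nat) \<Rightarrow> (nat \<Rightarrow> nat \<Rightarrow> real) \<Rightarrow> bool" where
  "feasible n k s x \<longleftrightarrow> (\<forall>u<n. in_simplex k (x u)) \<and>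
     (\<forall>i<k. \<forall>j<k. x (s i) j = basis_vec i j)"

definition energy :: "nat \<Rightarrow> nat \<Rightarrow> (nat \<Rightarrow> nat \<Rightarrow> real) \<Rightarrow> (nat \<Rightarrow> nat \<Rightarrow> real) \<Rightarrow> real" where
  "energy n k c x = (\<Sum>(u,v)\<in>{(u,v). u < v \<and> v < n}. c u v * l1dist k (x u) (x v))"

definition OPT :: "(nat \<Rightarrow> nat \<Rightarrow> real) \<Rightarrow> nat \<Rightarrow> nat \<Rightarrow> (nat \<Rightarrow> nat) \<Rightarrow> real" where
  "OPT c n k s = Inf {energy n k c x | x. feasible n k s x}"

definition terminals :: "nat \<Rightarrow> (nat \<Rightarrow> nat) \<Rightarrow> nat set" where
  "terminals k s = s ` {..<k}"

text \<open>Index set of the noise variables: the unordered pair {t,u} with t a terminal and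
  u a non-terminal is represented by the ordered pair (t,u).\<close>
definition noise_index :: "nat \<Rightarrow> nat \<Rightarrow> (nat \<Rightarrow> nat) \<Rightarrow> (nat \<times> nat) set" where
  "noise_index n k s = terminals k s \<times> ({..<n} - terminals k s)"

definition noisy_objective ::
  "nat \<Rightarrow> nat \<Rightarrow> (nat \<Rightarrow> nat) \<Rightarrow> (nat \<Rightarrow> nat \<Rightarrow> real) \<Rightarrow> (nat \<times> nat \<Rightarrow> real)
     \<Rightarrow> (nat \<Rightarrow> nat \<Rightarrow> real) \<Rightarrow> real" where
  "noisy_objective n k s c Z x = energy n k c x +
     (\<Sum>t\<in>terminals k s. \<Sum>u\<in>{..<n} - terminals k s. Z (t,u) * l1dist k (x t) (x u))"

definition noisy_optimal ::
  "nat \<Rightarrow> nat \<Rightarrow> (nat \<Rightarrow> nat) \<Rightarrow> (nat \<Rightarrow> nat \<Rightarrow> real) \<Rightarrow> (nat \<times> nat \<Rightarrow> real)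
     \<Rightarrow> (nat \<Rightarrow> nat \<Rightarrow> real) \<Rightarrow> bool" where
  "noisy_optimal n k s c Z x \<longleftrightarrow> feasible n k s x \<and>
     (\<forall>y. feasible n k s y \<longrightarrow> noisy_objective n k s c Z x \<le> noisy_objective n k s c Z y)"

definition laplace_density :: "real \<Rightarrow> real \<Rightarrow> real" where
  "laplace_density b x = exp (- \<bar>x\<bar> / b) / (2 * b)"

definition laplace :: "real \<Rightarrow> real measure" where
  "laplace b = density lborel (\<lambda>x. ennreal (laplace_density b x))"

definition noise_measure :: "real \<Rightarrow> nat \<Rightarrow> nat \<Rightarrow> (nat \<Rightarrow> nat) \<Rightarrow> (nat \<times> nat \<Rightarrow> real) measure" where
  "noise_measure eps n k s = PiM (noise_index n k s) (\<lambda>_. laplace (sqrt 2 * real k / eps))"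

definition valid_instance :: "nat \<Rightarrow> nat \<Rightarrow> (nat \<Rightarrow> nat) \<Rightarrow> (nat \<Rightarrow> nat \<Rightarrow> real) \<Rightarrow> bool" where
  "valid_instance n k s c \<longleftrightarrow> 2 \<le> k \<and> k \<le> n \<and> inj_on s {..<k} \<and> s ` {..<k} \<subseteq> {..<n} \<and>
     (\<forall>u v. c u v = c v u) \<and> (\<forall>u v. 0 \<le> c u v)"

end

theory Submission
  imports Defs
begin

text \<open>For a noisy optimum x and any feasible y, optimality gives
  E(x) - E(y) \<le> N(y) - N(x), where N is the noise term. Since terminals sit at basis vectors,
  the l1 distance between e_i and x_u is 2 - 2 x_u(i), so each non-terminal u contributes at most
  4 max_i |Z(s_i, u)|. Both bounds then come from the exponential moment E exp(|Z|/(2b)) = 2 of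
  Lap(b): the expectation via |z| \<le> 2b ln k + (2b/k) exp(|z|/(2b)), the tail via Markov's
  inequality and a union bound over the at most nk noise variables.\<close>

section \<open>The Laplace distribution\<close>

lemma nn_integral_exp_neg_abs:
  fixes c :: real
  assumes c: "c > 0"
  shows "(\<integral>\<^sup>+x. ennreal (exp (- (\<bar>x\<bar> / c))) \<partial>lborel) = ennreal (2 * c)"
proof -
  let ?e = "\<lambda>x. ennreal (exponential_density (1 / c) x)"
  have e_one: "(\<integral>\<^sup>+x. ?e x \<partial>lborel) = 1"
    using prob_space.emeasure_space_1[OF prob_space_exponential_density[of "1 / c"]] c
    by (simp add: emeasure_density)
  have e_reflected_one: "(\<integral>\<^sup>+x. ?e (- x) \<partial>lborel) = 1"
    using nn_integral_real_affine[of ?e "-1" 0] e_one by simp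
  \<comment> \<open>the two one-sided exponential densities of rate 1/c cover the two half-lines\<close>
  have "AE x in lborel. ennreal (exp (- (\<bar>x\<bar> / c))) = ennreal c * ?e x + ennreal c * ?e (- x)"
    using AE_lborel_singleton[of 0]
  proof eventually_elim
    case (elim x)
    then have "exp (- (\<bar>x\<bar> / c)) = c * exponential_density (1 / c) x + c * exponential_density (1 / c) (- x)"
      using c by (auto simp: exponential_density_def abs_if field_simps)
    then show ?case
      using c by (simp add: exponential_density_nonneg ennreal_plus ennreal_mult)
  qed
  then have "(\<integral>\<^sup>+x. ennreal (exp (- (\<bar>x\<bar> / c))) \<partial>lborel)
      = (\<integral>\<^sup>+x. ennreal c * ?e x + ennreal c * ?e (- x) \<partial>lborel)"
    by (rule nn_integral_cong_AE)
  also have "\<dots> = ennreal c * (\<integral>\<^sup>+x. ?e x \<partial>lborel) + ennreal c * (\<integral>\<^sup>+x. ?e (- x) \<partial>lborel)"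
    by (simp add: nn_integral_add nn_integral_cmult)
  also have "\<dots> = ennreal (2 * c)"
    using c by (simp add: e_one e_reflected_one ennreal_plus[symmetric] del: ennreal_plus)
  finally show ?thesis .
qed

lemma borel_measurable_laplace_density [measurable]: "laplace_density b \<in> borel_measurable borel"
  unfolding laplace_density_def by measurable

lemma laplace_density_nonneg: "b > 0 \<Longrightarrow> 0 \<le> laplace_density b x"
  by (simp add: laplace_density_def)

lemma nn_integral_laplace_density:
  assumes "b > 0"
  shows "(\<integral>\<^sup>+x. ennreal (laplace_density b x) \<partial>lborel) = 1"
proof -
  have "(\<integral>\<^sup>+x. ennreal (laplace_density b x) \<partial>lborel)
      = (\<integral>\<^sup>+x. ennreal (1 / (2 * b)) * ennreal (exp (- (\<bar>x\<bar> / b))) \<partial>lborel)"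
    using assms by (intro nn_integral_cong) (simp add: laplace_density_def ennreal_mult[symmetric])
  also have "\<dots> = ennreal (1 / (2 * b)) * ennreal (2 * b)"
    using assms by (simp add: nn_integral_cmult nn_integral_exp_neg_abs)
  also have "\<dots> = 1"
    using assms by (simp flip: ennreal_mult)
  finally show ?thesis .
qed

lemma prob_space_laplace: "b > 0 \<Longrightarrow> prob_space (laplace b)"
  unfolding laplace_def
  by (rule prob_spaceI, subst emeasure_density) (simp_all add: nn_integral_laplace_density)

lemma laplace_exp_moment:
  assumes b: "b > 0"
  shows "has_bochner_integral (laplace b) (\<lambda>x. exp (\<bar>x\<bar> / (2 * b))) 2"
  unfolding laplace_def
proof (rule has_bochner_integral_density)
  \<comment> \<open>tilting Lap(b) by exp(|x|/(2b)) gives twice the density of Lap(2b)\<close>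
  have tilt: "laplace_density b x *\<^sub>R exp (\<bar>x\<bar> / (2 * b)) = 2 * laplace_density (2 * b) x" for x
    using b by (simp add: laplace_density_def exp_add[symmetric] field_simps)
  have "(\<integral>\<^sup>+x. ennreal (laplace_density b x *\<^sub>R exp (\<bar>x\<bar> / (2 * b))) \<partial>lborel)
      = (\<integral>\<^sup>+x. ennreal 2 * ennreal (laplace_density (2 * b) x) \<partial>lborel)"
    unfolding tilt using b by (intro nn_integral_cong) (simp add: ennreal_mult laplace_density_nonneg)
  also have "\<dots> = ennreal 2"
    using b by (simp add: nn_integral_cmult nn_integral_laplace_density)
  finally have "(\<integral>\<^sup>+x. ennreal (laplace_density b x *\<^sub>R exp (\<bar>x\<bar> / (2 * b))) \<partial>lborel) = ennreal 2" .
  then show "has_bochner_integral lborel (\<lambda>x. laplace_density b x *\<^sub>R exp (\<bar>x\<bar> / (2 * b))) 2"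
    using b by (intro has_bochner_integral_nn_integral) (auto simp: laplace_density_def)
qed (use b in \<open>auto simp: laplace_density_def\<close>)

lemma has_bochner_integral_PiM_component:
  fixes f :: "'a \<Rightarrow> 'b::{banach, second_countable_topology}"
  assumes M: "\<And>i. i \<in> I \<Longrightarrow> prob_space (M i)" and i: "i \<in> I"
    and f: "has_bochner_integral (M i) f v"
  shows "has_bochner_integral (Pi\<^sub>M I M) (\<lambda>Z. f (Z i)) v"
proof -
  have comp: "(\<lambda>Z. Z i) \<in> measurable (Pi\<^sub>M I M) (M i)"
    using i by (rule measurable_component_singleton)
  have f_meas: "f \<in> borel_measurable (M i)"
    using f by (auto simp: has_bochner_integral_iff)
  have "has_bochner_integral (distr (Pi\<^sub>M I M) (M i) (\<lambda>Z. Z i)) f v"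
    using f distr_PiM_component[of I M i, OF M i] by simp
  then show ?thesis
    by (simp add: has_bochner_integral_iff integrable_distr_eq[OF comp f_meas] integral_distr[OF comp f_meas])
qed

lemma PiM_laplace_component_measurable:
  fixes I :: "'i set"
  shows "p \<in> I \<Longrightarrow> (\<lambda>Z. Z p) \<in> borel_measurable (Pi\<^sub>M I (\<lambda>_. laplace b))"
  using measurable_component_singleton[of p I "\<lambda>_. laplace b"] by (simp add: laplace_def)

lemma PiM_laplace_large_component_sets:
  fixes I :: "'i set"
  assumes I: "finite I"
  shows "{Z \<in> space (Pi\<^sub>M I (\<lambda>_. laplace b)). \<exists>p\<in>I. r \<le> \<bar>Z p\<bar>} \<in> sets (Pi\<^sub>M I (\<lambda>_. laplace b))"
proof -
  have [measurable]: "(\<lambda>Z. Z p) \<in> borel_measurable (Pi\<^sub>M I (\<lambda>_. laplace b))" if "p \<in> I" for p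
    using that by (rule PiM_laplace_component_measurable)
  show ?thesis
    using I by measurable
qed

context
  fixes b :: real and I :: "'i set"
  assumes b: "b > 0"
begin

lemma PiM_laplace_exp_moment:
  "p \<in> I \<Longrightarrow> has_bochner_integral (Pi\<^sub>M I (\<lambda>_. laplace b)) (\<lambda>Z. exp (\<bar>Z p\<bar> / (2 * b))) 2"
  using b by (intro has_bochner_integral_PiM_component prob_space_laplace laplace_exp_moment)

lemma PiM_laplace_tail:
  assumes p: "p \<in> I"
  shows "measure (Pi\<^sub>M I (\<lambda>_. laplace b)) {Z \<in> space (Pi\<^sub>M I (\<lambda>_. laplace b)). r \<le> \<bar>Z p\<bar>}
    \<le> 2 * exp (- r / (2 * b))"
proof -
  let ?N = "Pi\<^sub>M I (\<lambda>_. laplace b)"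
  have moment: "has_bochner_integral ?N (\<lambda>Z. exp (\<bar>Z p\<bar> / (2 * b))) 2"
    using p by (rule PiM_laplace_exp_moment)
  have "{Z \<in> space ?N. r \<le> \<bar>Z p\<bar>} = {Z \<in> space ?N. exp (r / (2 * b)) \<le> exp (\<bar>Z p\<bar> / (2 * b))}"
    using b by (auto simp: divide_le_cancel)
  also have "measure ?N \<dots> \<le> (\<integral>Z. exp (\<bar>Z p\<bar> / (2 * b)) \<partial>?N) / exp (r / (2 * b))"
    by (rule integral_Markov_inequality_measure[where A = "space ?N"])
      (use moment in \<open>auto simp: has_bochner_integral_iff\<close>)
  also have "\<dots> = 2 * exp (- r / (2 * b))"
    using moment by (simp add: has_bochner_integral_iff exp_minus field_simps)
  finally show ?thesis .
qed

lemma PiM_laplace_max_tail: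
  assumes I: "finite I"
  shows "measure (Pi\<^sub>M I (\<lambda>_. laplace b)) {Z \<in> space (Pi\<^sub>M I (\<lambda>_. laplace b)). \<exists>p\<in>I. r \<le> \<bar>Z p\<bar>}
    \<le> real (card I) * (2 * exp (- r / (2 * b)))"
proof -
  let ?N = "Pi\<^sub>M I (\<lambda>_. laplace b)"
  let ?A = "\<lambda>p. {Z \<in> space ?N. r \<le> \<bar>Z p\<bar>}"
  interpret N: prob_space ?N
    using b by (intro prob_space_PiM prob_space_laplace)
  have "measure ?N {Z \<in> space ?N. \<exists>p\<in>I. r \<le> \<bar>Z p\<bar>} = measure ?N (\<Union>p\<in>I. ?A p)"
    by (rule arg_cong[where f = "measure ?N"]) auto
  also have "\<dots> \<le> (\<Sum>p\<in>I. measure ?N (?A p))"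
  proof (intro N.finite_measure_subadditive_finite I subsetI)
    fix A assume "A \<in> ?A ` I"
    then obtain p where "p \<in> I" and A: "A = ?A p" by blast
    have [measurable]: "(\<lambda>Z. Z p) \<in> borel_measurable ?N"
      using \<open>p \<in> I\<close> by (rule PiM_laplace_component_measurable)
    show "A \<in> sets ?N"
      unfolding A by measurable
  qed
  also have "\<dots> \<le> (\<Sum>p\<in>I. 2 * exp (- r / (2 * b)))"
    by (intro sum_mono PiM_laplace_tail)
  finally show ?thesis by simp
qed

end

section \<open>The excess energy of a noisy optimum\<close>

lemma in_simplex_le_one:
  assumes "in_simplex k p" "j < k"
  shows "p j \<le> 1"
proof -
  have "p j \<le> (\<Sum>i<k. p i)"
    using assms by (intro member_le_sum) (auto simp: in_simplex_def)
  then show ?thesis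
    using assms(1) by (simp add: in_simplex_def)
qed

lemma l1dist_basis_vec_simplex:
  assumes p: "in_simplex k p" and i: "i < k" and q: "\<forall>j<k. q j = basis_vec i j"
  shows "l1dist k q p = 2 - 2 * p i"
proof -
  have p0: "\<forall>j<k. 0 \<le> p j" and p1: "(\<Sum>j<k. p j) = 1"
    using p by (auto simp: in_simplex_def)
  have "l1dist k q p = (\<Sum>j<k. basis_vec i j + p j - 2 * (basis_vec i j * p j))"
    unfolding l1dist_def using q p0 in_simplex_le_one[OF p]
    by (intro sum.cong) (auto simp: basis_vec_def)
  also have "\<dots> = (\<Sum>j<k. basis_vec i j) + (\<Sum>j<k. p j) - 2 * (\<Sum>j<k. basis_vec i j * p j)"
    by (simp add: sum_subtractf sum.distrib sum_distrib_left)
  also have "\<dots> = 2 - 2 * p i"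
    using i p1 by (simp add: basis_vec_def if_distrib[of "\<lambda>c. c * _"] cong: if_cong)
  finally show ?thesis .
qed

lemma in_simplex_weighted_sum_abs_le:
  assumes p: "in_simplex k p" and z: "\<forall>i<k. \<bar>z i\<bar> \<le> t + h i" and h: "\<forall>i<k. 0 \<le> h i"
  shows "\<bar>\<Sum>i<k. z i * p i\<bar> \<le> t + (\<Sum>i<k. h i)"
proof -
  have p0: "\<forall>j<k. 0 \<le> p j" and p1: "(\<Sum>j<k. p j) = 1"
    using p by (auto simp: in_simplex_def)
  have "\<bar>\<Sum>i<k. z i * p i\<bar> \<le> (\<Sum>i<k. \<bar>z i\<bar> * p i)"
    using p0 by (auto intro: order.trans[OF sum_abs] simp: abs_mult)
  also have "\<dots> \<le> (\<Sum>i<k. t * p i + h i)"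
  proof (intro sum_mono)
    fix i assume "i \<in> {..<k}"
    then have "\<bar>z i\<bar> * p i \<le> (t + h i) * p i" "h i * p i \<le> h i"
      using z p0 h in_simplex_le_one[OF p] by (auto intro: mult_right_mono mult_left_le)
    then show "\<bar>z i\<bar> * p i \<le> t * p i + h i"
      by (simp add: algebra_simps)
  qed
  also have "\<dots> = t + (\<Sum>i<k. h i)"
    by (simp add: sum.distrib p1 flip: sum_distrib_left)
  finally show ?thesis .
qed

lemma terminal_noise_feasible:
  assumes inj: "inj_on s {..<k}" and w: "feasible n k s w"
  shows "(\<Sum>t\<in>terminals k s. \<Sum>u\<in>{..<n} - terminals k s. Z (t, u) * l1dist k (w t) (w u))
    = (\<Sum>u\<in>{..<n} - terminals k s. \<Sum>i<k. Z (s i, u) * (2 - 2 * w u i))"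
proof -
  let ?U = "{..<n} - terminals k s"
  have "(\<Sum>t\<in>terminals k s. \<Sum>u\<in>?U. Z (t, u) * l1dist k (w t) (w u))
      = (\<Sum>i<k. \<Sum>u\<in>?U. Z (s i, u) * l1dist k (w (s i)) (w u))"
    unfolding terminals_def by (simp add: sum.reindex[OF inj])
  also have "\<dots> = (\<Sum>i<k. \<Sum>u\<in>?U. Z (s i, u) * (2 - 2 * w u i))"
    using w by (intro sum.cong refl) (simp add: l1dist_basis_vec_simplex feasible_def)
  also have "\<dots> = (\<Sum>u\<in>?U. \<Sum>i<k. Z (s i, u) * (2 - 2 * w u i))"
    by (rule sum.swap)
  finally show ?thesis .
qed

lemma noisy_optimal_energy_gap_le:
  assumes inj: "inj_on s {..<k}" and x: "noisy_optimal n k s c Z x" and y: "feasible n k s y"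
    and Z_le: "\<forall>i<k. \<forall>u\<in>{..<n} - terminals k s. \<bar>Z (s i, u)\<bar> \<le> t + h i u"
    and h: "\<forall>i<k. \<forall>u\<in>{..<n} - terminals k s. 0 \<le> h i u"
  shows "energy n k c x - energy n k c y \<le> 4 * (\<Sum>u\<in>{..<n} - terminals k s. t + (\<Sum>i<k. h i u))"
proof -
  let ?U = "{..<n} - terminals k s"
  let ?zp = "\<lambda>w u. \<Sum>i<k. Z (s i, u) * w u i"
  have x_feas: "feasible n k s x" and "noisy_objective n k s c Z x \<le> noisy_objective n k s c Z y"
    using x y by (auto simp: noisy_optimal_def)
  then have "energy n k c x - energy n k c y \<le>
      (\<Sum>u\<in>?U. \<Sum>i<k. Z (s i, u) * (2 - 2 * y u i)) - (\<Sum>u\<in>?U. \<Sum>i<k. Z (s i, u) * (2 - 2 * x u i))"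
    using terminal_noise_feasible[OF inj x_feas, of Z] terminal_noise_feasible[OF inj y, of Z]
    by (simp add: noisy_objective_def)
  also have "\<dots> = (\<Sum>u\<in>?U. 2 * (?zp x u - ?zp y u))"
    by (simp add: sum_subtractf[symmetric] sum_distrib_left algebra_simps)
  also have "\<dots> \<le> (\<Sum>u\<in>?U. 4 * (t + (\<Sum>i<k. h i u)))"
  proof (intro sum_mono)
    fix u assume u: "u \<in> ?U"
    have "\<bar>?zp w u\<bar> \<le> t + (\<Sum>i<k. h i u)" if "feasible n k s w" for w
      using that u Z_le h by (intro in_simplex_weighted_sum_abs_le) (auto simp: feasible_def)
    from this[OF x_feas] this[OF y] show "2 * (?zp x u - ?zp y u) \<le> 4 * (t + (\<Sum>i<k. h i u))"
      by (auto simp: abs_le_iff)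
  qed
  finally show ?thesis
    by (simp add: sum_distrib_left)
qed

lemma feasible_exists:
  assumes inj: "inj_on s {..<k}" and k: "0 < k"
  shows "\<exists>y. feasible n k s y"
proof -
  define y where "y u = (if u \<in> s ` {..<k} then basis_vec (the_inv_into {..<k} s u) else basis_vec 0)"
    for u
  have simplex_basis: "i < k \<Longrightarrow> in_simplex k (basis_vec i)" for i
    by (simp add: in_simplex_def basis_vec_def)
  have "in_simplex k (y u)" for u
    using k inj by (auto simp: y_def the_inv_into_f_f simplex_basis)
  moreover have "y (s i) = basis_vec i" if "i < k" for i
    using that inj by (simp add: y_def the_inv_into_f_f)
  ultimately have "feasible n k s y"
    unfolding feasible_def by auto
  then show ?thesis by blast
qed

lemma energy_nonneg: "(\<forall>u v. 0 \<le> c u v) \<Longrightarrow> 0 \<le> energy n k c x"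
  unfolding energy_def l1dist_def by (intro sum_nonneg) (auto intro!: mult_nonneg_nonneg sum_nonneg)

lemma energy_minus_OPT_le:
  assumes inj: "inj_on s {..<k}" and k: "0 < k" and c: "\<forall>u v. 0 \<le> c u v"
    and B: "\<forall>y. feasible n k s y \<longrightarrow> energy n k c x - energy n k c y \<le> B"
  shows "energy n k c x - OPT c n k s \<le> B"
proof -
  have "energy n k c x - B \<le> OPT c n k s"
    unfolding OPT_def using feasible_exists[OF inj k] B energy_nonneg[OF c]
    by (intro cInf_greatest) (auto intro: bdd_belowI)
  then show ?thesis by simp
qed

lemma noisy_optimal_excess_le:
  assumes v: "valid_instance n k s c" and x: "noisy_optimal n k s c Z x"
    and Z_le: "\<forall>i<k. \<forall>u\<in>{..<n} - terminals k s. \<bar>Z (s i, u)\<bar> \<le> t + h i u"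
    and h: "\<forall>i<k. \<forall>u\<in>{..<n} - terminals k s. 0 \<le> h i u"
  shows "energy n k c x - OPT c n k s \<le> 4 * (\<Sum>u\<in>{..<n} - terminals k s. t + (\<Sum>i<k. h i u))"
  using v by (intro energy_minus_OPT_le allI impI noisy_optimal_energy_gap_le[OF _ x _ Z_le h])
    (auto simp: valid_instance_def)

section \<open>The Laplace mechanism\<close>

lemma ln_2_ge_half: "ln 2 \<ge> (1 / 2 :: real)"
  using ln_diff_le[of 1 2] by simp

lemma sqrt_2_le: "sqrt 2 \<le> (3 / 2 :: real)"
  by (rule real_le_lsqrt) (auto simp: power2_eq_square)

lemma abs_le_ln_plus_exp:
  fixes z b m :: real
  assumes b: "b > 0" and m: "m > 0"
  shows "\<bar>z\<bar> \<le> 2 * b * ln m + (2 * b / m) * exp (\<bar>z\<bar> / (2 * b))"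
proof -
  define w where "w = (\<bar>z\<bar> - 2 * b * ln m) / (2 * b)"
  have "w \<le> exp w"
    using exp_ge_add_one_self[of w] by linarith
  also have "exp w = exp (\<bar>z\<bar> / (2 * b)) / m"
    using b m by (simp add: w_def diff_divide_distrib exp_diff)
  finally show ?thesis
    using b by (simp add: w_def field_simps)
qed

locale laplace_mechanism =
  fixes eps :: real and n k :: nat and s :: "nat \<Rightarrow> nat" and c :: "nat \<Rightarrow> nat \<Rightarrow> real"
    and sel :: "(nat \<times> nat \<Rightarrow> real) \<Rightarrow> nat \<Rightarrow> nat \<Rightarrow> real"
  assumes eps_pos: "eps > 0" and valid: "valid_instance n k s c"
    and sel_optimal: "\<forall>Z\<in>space (noise_measure eps n k s). noisy_optimal n k s c Z (sel Z)"
begin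

definition scale :: real where "scale = sqrt 2 * real k / eps"

abbreviation N where "N \<equiv> noise_measure eps n k s"
abbreviation U where "U \<equiv> {..<n} - terminals k s"

lemma k_ge_2: "2 \<le> k" and k_le_n: "k \<le> n"
  using valid by (auto simp: valid_instance_def)

lemma scale_pos: "scale > 0"
  using eps_pos k_ge_2 by (simp add: scale_def)

lemma N_eq: "N = Pi\<^sub>M (noise_index n k s) (\<lambda>_. laplace scale)"
  by (simp add: noise_measure_def scale_def)

sublocale N: prob_space N
  unfolding N_eq by (intro prob_space_PiM prob_space_laplace scale_pos)

lemma finite_noise_index: "finite (noise_index n k s)"
  by (simp add: noise_index_def terminals_def)

lemma noise_index_mem: "i < k \<Longrightarrow> u \<in> U \<Longrightarrow> (s i, u) \<in> noise_index n k s"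
  by (simp add: noise_index_def terminals_def)

lemma card_U_le: "card U \<le> n"
  by (metis card_lessThan card_mono Diff_subset finite_lessThan)

lemma card_noise_index_le: "card (noise_index n k s) \<le> n * k"
proof -
  have "card (terminals k s) \<le> k"
    unfolding terminals_def by (metis card_image_le card_lessThan finite_lessThan)
  then show ?thesis
    using card_U_le by (simp add: noise_index_def card_cartesian_product mult_le_mono mult.commute)
qed

lemma expected_excess_le:
  "(\<integral>Z. energy n k c (sel Z) \<partial>N) - OPT c n k s \<le> 4 * real n * (2 * scale * ln k + 4 * scale)"
proof -
  define t where "t = 2 * scale * ln k"
  define R where "R Z = 4 * (\<Sum>u\<in>U. t + (\<Sum>i<k. (2 * scale / k) * exp (\<bar>Z (s i, u)\<bar> / (2 * scale))))"
    for Z :: "nat \<times> nat \<Rightarrow> real"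
  have excess_le_R: "energy n k c (sel Z) \<le> OPT c n k s + R Z" if "Z \<in> space N" for Z
  proof -
    have "energy n k c (sel Z) - OPT c n k s \<le> R Z"
      unfolding R_def t_def
      by (rule noisy_optimal_excess_le[OF valid sel_optimal[rule_format, OF that]])
        (use abs_le_ln_plus_exp[OF scale_pos] k_ge_2 scale_pos in auto)
    then show ?thesis by simp
  qed
  have R_integral: "has_bochner_integral N (\<lambda>Z. OPT c n k s + R Z)
      (OPT c n k s + 4 * (\<Sum>u\<in>U. t + (\<Sum>i<k. (2 * scale / k) * 2)))"
    unfolding R_def N_eq
    using scale_pos noise_index_mem
    by (intro has_bochner_integral_add has_bochner_integral_mult_right has_bochner_integral_sum
        PiM_laplace_exp_moment) (auto simp: has_bochner_integral_iff N.prob_space simp flip: N_eq)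
  have "(\<integral>Z. energy n k c (sel Z) \<partial>N) \<le> (\<integral>Z. OPT c n k s + R Z \<partial>N)"
  proof (rule integral_mono')
    show "integrable N (\<lambda>Z. OPT c n k s + R Z)"
      using R_integral by (simp add: has_bochner_integral_iff)
    fix Z assume "Z \<in> space N"
    moreover have "0 \<le> energy n k c (sel Z)"
      using valid energy_nonneg by (simp add: valid_instance_def)
    ultimately show "energy n k c (sel Z) \<le> OPT c n k s + R Z" "0 \<le> OPT c n k s + R Z"
      using excess_le_R by force+
  qed
  also have "\<dots> = OPT c n k s + 4 * (real (card U) * (t + 4 * scale))"
    using R_integral k_ge_2 by (simp add: has_bochner_integral_iff)
  also have "\<dots> \<le> OPT c n k s + 4 * (real n * (t + 4 * scale))"
    using card_U_le scale_pos k_ge_2 by (auto simp: t_def intro!: mult_right_mono)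
  finally show ?thesis
    by (simp add: t_def)
qed

lemma excess_tail:
  assumes meas: "(\<lambda>Z. energy n k c (sel Z)) \<in> borel_measurable N" and r: "0 \<le> r"
  shows "measure N {Z \<in> space N. energy n k c (sel Z) - OPT c n k s \<le> 4 * real n * r}
    \<ge> 1 - real n * real k * (2 * exp (- r / (2 * scale)))"
proof -
  let ?I = "noise_index n k s"
  let ?G = "{Z \<in> space N. energy n k c (sel Z) - OPT c n k s \<le> 4 * real n * r}"
  let ?Bad = "{Z \<in> space N. \<exists>p\<in>?I. r \<le> \<bar>Z p\<bar>}"
  have G_sets: "?G \<in> sets N"
    using meas by measurable
  have "space N - ?G \<subseteq> ?Bad"
  proof (rule subsetI, rule ccontr)
    fix Z assume Z: "Z \<in> space N - ?G" and "Z \<notin> ?Bad"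
    then have "\<forall>i<k. \<forall>u\<in>U. \<bar>Z (s i, u)\<bar> \<le> r + 0"
      using noise_index_mem by force
    then have "energy n k c (sel Z) - OPT c n k s \<le> 4 * (\<Sum>u\<in>U. r + (\<Sum>i<k. 0))"
      using Z sel_optimal by (intro noisy_optimal_excess_le[OF valid]) auto
    also have "\<dots> \<le> 4 * real n * r"
      using card_U_le r by (simp add: mult_right_mono)
    finally show False
      using Z by simp
  qed
  then have "measure N (space N - ?G) \<le> measure N ?Bad"
    using PiM_laplace_large_component_sets[OF finite_noise_index]
    by (intro N.finite_measure_mono) (simp_all add: N_eq)
  also have "\<dots> \<le> real (card ?I) * (2 * exp (- r / (2 * scale)))"
    unfolding N_eq by (rule PiM_laplace_max_tail[OF scale_pos finite_noise_index])
  also have "\<dots> \<le> real n * real k * (2 * exp (- r / (2 * scale)))"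
    using card_noise_index_le by (intro mult_right_mono) (simp_all flip: of_nat_mult)
  finally show ?thesis
    using N.prob_compl[OF G_sets] by simp
qed

lemma expected_excess_bound:
  "(\<integral>Z. energy n k c (sel Z) \<partial>N) - OPT c n k s \<le> 60 * real n * real k * ln (real k) / eps"
proof -
  have "ln 2 \<le> ln (real k)"
    using k_ge_2 by simp
  then have ln_k: "1 / 2 \<le> ln (real k)"
    using ln_2_ge_half by linarith
  have "4 * real n * (2 * scale * ln k + 4 * scale) \<le> 40 * real n * scale * ln k"
    using ln_k scale_pos by (simp add: mult_left_mono algebra_simps)
  also have "\<dots> = 40 * sqrt 2 * (real n * real k * ln k / eps)"
    by (simp add: scale_def)
  also have "\<dots> \<le> 60 * (real n * real k * ln k / eps)"
    using sqrt_2_le ln_k eps_pos by (intro mult_right_mono) auto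
  finally show ?thesis
    using expected_excess_le by simp
qed

lemma nk_ge_4: "4 \<le> real n * real k"
  using k_ge_2 k_le_n mult_mono[of 2 "real n" 2 "real k"] by simp

lemma ln_nk_ge_ln_2: "ln 2 \<le> ln (real n * real k)"
  using nk_ge_4 by simp

text \<open>The radius is chosen so that the union bound over the nk noise variables equals (nk)^(-a).\<close>
definition tail_radius :: "real \<Rightarrow> real" where
  "tail_radius a = 2 * scale * ((1 + a) * ln (real n * real k) + ln 2)"

lemma tail_radius_nonneg: "a > 0 \<Longrightarrow> 0 \<le> tail_radius a"
  using ln_nk_ge_ln_2 ln_2_ge_half scale_pos by (simp add: tail_radius_def)

lemma tail_radius_failure_probability:
  "real n * real k * (2 * exp (- tail_radius a / (2 * scale))) = (real n * real k) powr (- a)"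
proof -
  let ?L = "ln (real n * real k)"
  have "- tail_radius a / (2 * scale) = - ((1 + a) * ?L) - ln 2"
    using scale_pos by (simp add: tail_radius_def field_simps)
  then have "2 * exp (- tail_radius a / (2 * scale)) = exp (- ((1 + a) * ?L))"
    by (simp add: exp_diff)
  also have "\<dots> = (real n * real k) powr (- (1 + a))"
    using k_ge_2 k_le_n by (simp add: powr_def algebra_simps)
  finally show ?thesis
    using nk_ge_4 by (simp add: powr_add[of _ 1 "- (1 + a)", simplified] flip: powr_add)
qed

lemma tail_radius_excess_le:
  assumes a: "a > 0"
  shows "4 * real n * tail_radius a \<le> 12 * (2 + a) * real n * real k * ln (real n * real k) / eps"
proof -
  let ?L = "ln (real n * real k)"
  have "4 * real n * tail_radius a \<le> 8 * real n * scale * ((2 + a) * ?L)"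
    using ln_nk_ge_ln_2 scale_pos
    by (simp add: tail_radius_def mult.assoc mult_left_mono algebra_simps)
  also have "\<dots> = 8 * sqrt 2 * ((2 + a) * real n * real k * ?L / eps)"
    by (simp add: scale_def)
  also have "\<dots> \<le> 12 * ((2 + a) * real n * real k * ?L / eps)"
    using sqrt_2_le a eps_pos ln_nk_ge_ln_2 ln_2_ge_half by (intro mult_right_mono) auto
  also have "\<dots> = 12 * (2 + a) * real n * real k * ?L / eps"
    by simp
  finally show ?thesis .
qed

lemma high_probability_bound:
  assumes a: "a > 0" and meas: "(\<lambda>Z. energy n k c (sel Z)) \<in> borel_measurable N"
  shows "measure N {Z \<in> space N.
      energy n k c (sel Z) - OPT c n k s \<le> 12 * (2 + a) * real n * real k * ln (real n * real k) / eps}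
    \<ge> 1 - (real n * real k) powr (- a)"
proof -
  let ?K = "12 * (2 + a) * real n * real k * ln (real n * real k) / eps"
  have "1 - (real n * real k) powr (- a)
      \<le> measure N {Z \<in> space N. energy n k c (sel Z) - OPT c n k s \<le> 4 * real n * tail_radius a}"
    using excess_tail[OF meas tail_radius_nonneg[OF a]] tail_radius_failure_probability by simp
  also have "\<dots> \<le> measure N {Z \<in> space N. energy n k c (sel Z) - OPT c n k s \<le> ?K}"
    using tail_radius_excess_le[OF a] meas by (intro N.finite_measure_mono) (auto, measurable)
  finally show ?thesis .
qed

end

theorem theorem4p6:
  shows
  "(\<exists>C::real. \<forall>eps n k s c sel.
      eps > 0 \<longrightarrow> valid_instance n k s c \<longrightarrow>
      (\<forall>Z\<in>space (noise_measure eps n k s). noisy_optimal n k s c Z (sel Z)) \<longrightarrow>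
      (\<lambda>Z. energy n k c (sel Z)) \<in> borel_measurable (noise_measure eps n k s) \<longrightarrow>
      (\<integral>Z. energy n k c (sel Z) \<partial>noise_measure eps n k s) - OPT c n k s
        \<le> C * real n * real k * ln (real k) / eps)
   \<and>
   (\<forall>a::real. a > 0 \<longrightarrow> (\<exists>C::real. \<forall>eps n k s c sel.
      eps > 0 \<longrightarrow> valid_instance n k s c \<longrightarrow>
      (\<forall>Z\<in>space (noise_measure eps n k s). noisy_optimal n k s c Z (sel Z)) \<longrightarrow>
      (\<lambda>Z. energy n k c (sel Z)) \<in> borel_measurable (noise_measure eps n k s) \<longrightarrow>
      measure (noise_measure eps n k s)
        {Z \<in> space (noise_measure eps n k s).
           energy n k c (sel Z) - OPT c n k s \<le> C * real n * real k * ln (real n * real k) / eps}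
        \<ge> 1 - (real n * real k) powr (- a)))"
  apply (intro conjI allI impI)
  subgoal
    by (auto intro!: exI[of _ 60] laplace_mechanism.expected_excess_bound laplace_mechanism.intro)
  subgoal for a
    by (auto intro!: exI[of _ "12 * (2 + a)"] laplace_mechanism.high_probability_bound
        laplace_mechanism.intro)
  done

end
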